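(* Let $(G,d)$ be a boundedly compact $p$-uniformly convex metric space with $p\in(1,\infty)$ and $c>0$, $f:G\to\mathbb{R}$ proper, lower semicontinuous and convex, and $\lambda>0$. Then $x_+=\mathrm{prox}^p_{f,\lambda}(x)$ if and only if $$\frac{4}{cp\lambda^{p-1}}\Delta^{(p,c)}(x_+,x,x_+,y)-\frac{2-c}{2p\lambda^{p-1}}d(x_+,y)^p\le f(y)-f(x_+)\qquad\forall y\in G.$$
   Context: $(G,d)$ is uniquely geodesic; $(1-\tau)x\oplus\tau y$ is the point on the geodesic from $x$ to $y$ at distance $\tau d(x,y)$ from $x$. $p$-uniform convexity with constant $c$: $d(z,(1-\tau)x\oplus\tau y)^p\le(1-\tau)d(z,x)^p+\tau d(z,y)^p-\frac c2\tau(1-\tau)d(x,y)^p$. $f$ convex: $f((1-\tau)x\oplus\tau y)\le(1-\tau)f(x)+\tau f(y)$. $\mathrm{prox}^p_{f,\lambda}(x)=\operatorname{argmin}_{y\in G}\{f(y)+\frac1{p\lambda^{p-1}}d(y,x)^p\}$. $\Delta^{(p,c)}(x,y,u,v)=\frac c4\big(d(x,v)^p+d(y,u)^p-d(x,u)^p-d(y,v)^p\big)$. *)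

theory Defs
  imports "HOL-Analysis.Analysis"
begin

text \<open>The metric space (G,d) is the whole of a type of class metric_space, d = dist.\<close>

definition boundedly_compact :: "'a::metric_space itself \<Rightarrow> bool" where
  "boundedly_compact _ \<longleftrightarrow> (\<forall>S::'a set. bounded S \<and> closed S \<longrightarrow> compact S)"

definition is_geodesic :: "(real \<Rightarrow> 'a::metric_space) \<Rightarrow> 'a \<Rightarrow> 'a \<Rightarrow> bool" where
  "is_geodesic \<gamma> x y \<longleftrightarrow> \<gamma> 0 = x \<and> \<gamma> 1 = y \<and>
     (\<forall>s\<in>{0..1}. \<forall>t\<in>{0..1}. dist (\<gamma> s) (\<gamma> t) = \<bar>s - t\<bar> * dist x y)"

definition uniquely_geodesic :: "'a::metric_space itself \<Rightarrow> bool" where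
  "uniquely_geodesic _ \<longleftrightarrow> (\<forall>x y::'a. \<exists>\<gamma>. is_geodesic \<gamma> x y \<and>
      (\<forall>\<gamma>'. is_geodesic \<gamma>' x y \<longrightarrow> (\<forall>t\<in>{0..1}. \<gamma>' t = \<gamma> t)))"

text \<open>geo x y \<tau> = (1-\<tau>) x \<oplus> \<tau> y : the point of the geodesic from x to y at distance \<tau> d(x,y) from x.\<close>
definition geo :: "'a::metric_space \<Rightarrow> 'a \<Rightarrow> real \<Rightarrow> 'a" where
  "geo x y \<tau> = (THE z. \<exists>\<gamma>. is_geodesic \<gamma> x y \<and> z = \<gamma> \<tau>)"

definition p_uniformly_convex :: "'a::metric_space itself \<Rightarrow> real \<Rightarrow> real \<Rightarrow> bool" where
  "p_uniformly_convex _ p c \<longleftrightarrow>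
     (\<forall>x y z::'a. \<forall>\<tau>\<in>{0..1}.
        dist z (geo x y \<tau>) powr p \<le> (1 - \<tau>) * dist z x powr p + \<tau> * dist z y powr p
          - c / 2 * \<tau> * (1 - \<tau>) * dist x y powr p)"

definition geo_convex :: "('a::metric_space \<Rightarrow> real) \<Rightarrow> bool" where
  "geo_convex f \<longleftrightarrow> (\<forall>x y. \<forall>\<tau>\<in>{0..1}. f (geo x y \<tau>) \<le> (1 - \<tau>) * f x + \<tau> * f y)"

definition lsc :: "('a::topological_space \<Rightarrow> real) \<Rightarrow> bool" where
  "lsc f \<longleftrightarrow> (\<forall>t. closed {x. f x \<le> t})"

definition prox :: "real \<Rightarrow> ('a::metric_space \<Rightarrow> real) \<Rightarrow> real \<Rightarrow> 'a \<Rightarrow> 'a" where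
  "prox p f lam x = (THE y. \<forall>z. f y + 1 / (p * lam powr (p - 1)) * dist y x powr p
                             \<le> f z + 1 / (p * lam powr (p - 1)) * dist z x powr p)"

definition Delta :: "real \<Rightarrow> real \<Rightarrow> 'a::metric_space \<Rightarrow> 'a \<Rightarrow> 'a \<Rightarrow> 'a \<Rightarrow> real" where
  "Delta p c x y u v = c / 4 * (dist x v powr p + dist y u powr p - dist x u powr p - dist y v powr p)"

end

theory Submission
  imports Defs
begin

text \<open>Write g for the objective f + K d(\<cdot>, x)^p of the proximal problem, K = 1/(p \<lambda>^(p-1)).
  Convexity of f and p-uniform convexity of the space make g uniformly convex: comparing a
  minimiser u with the points of the geodesic from u towards y and letting the geodesic
  parameter tend to 0 gives the growth bound g(u) + (c/2) K d(u, y)^p \<le> g(y). This bound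
  makes the minimiser unique and, conversely, characterises it; after unfolding \<Delta> it is
  exactly the stated inequality. A minimiser exists because g is lower semicontinuous and its
  sublevel sets are bounded, hence compact: f grows at least linearly along geodesics, while
  the penalty grows like d^p with p > 1.\<close>

lemma lsc_add_continuous:
  fixes f \<phi> :: "'a::topological_space \<Rightarrow> real"
  assumes "lsc f" and "continuous_on UNIV \<phi>"
  shows "lsc (\<lambda>z. f z + \<phi> z)"
  unfolding lsc_def closed_def
proof (intro allI, subst open_subopen, intro ballI)
  fix t z0 assume "z0 \<in> - {z. f z + \<phi> z \<le> t}"
  then have "f z0 + \<phi> z0 > t" by auto
  define e where "e = (f z0 + \<phi> z0 - t) / 2"
  have e: "e > 0" using \<open>f z0 + \<phi> z0 > t\<close> e_def by auto
  let ?T = "- {z. f z \<le> f z0 - e} \<inter> {z. \<phi> z0 - e < \<phi> z}"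
  have "open (- {z. f z \<le> f z0 - e})" using assms(1) unfolding lsc_def by auto
  moreover have "open {z. \<phi> z0 - e < \<phi> z}"
    by (rule open_Collect_less) (auto intro: continuous_intros assms(2))
  ultimately have "open ?T" by auto
  moreover have "z0 \<in> ?T" using e by auto
  moreover have "?T \<subseteq> - {z. f z + \<phi> z \<le> t}" using e_def by auto
  ultimately show "\<exists>T. open T \<and> z0 \<in> T \<and> T \<subseteq> - {z. f z + \<phi> z \<le> t}" by blast
qed

lemma lsc_attains_min_on_compact:
  fixes F :: "'a::topological_space \<Rightarrow> real"
  assumes "lsc F" and "compact S" and "S \<noteq> {}"
  shows "\<exists>z\<in>S. \<forall>w\<in>S. F z \<le> F w"
proof -
  have "S \<inter> (\<Inter>i\<in>S. {z. F z \<le> F i}) \<noteq> {}"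
  proof (rule compact_imp_fip_image[OF assms(2)])
    show "closed {z. F z \<le> F i}" for i using assms(1) unfolding lsc_def by blast
  next
    fix I assume I: "finite I" "I \<subseteq> S"
    show "S \<inter> (\<Inter>i\<in>I. {z. F z \<le> F i}) \<noteq> {}"
    proof (cases "I = {}")
      case True
      then show ?thesis using assms(3) by auto
    next
      case False
      then have "Min (F ` I) \<in> F ` I" using I by simp
      then obtain i where "i \<in> I" "F i = Min (F ` I)" by auto
      then show ?thesis using I by auto
    qed
  qed
  then show ?thesis by auto
qed

lemma lsc_attains_min_if_bounded_sublevel:
  fixes g :: "'a::metric_space \<Rightarrow> real"
  assumes "boundedly_compact TYPE('a)" and "lsc g" and "bounded {z. g z \<le> g x}"
  shows "\<exists>z. \<forall>w. g z \<le> g w"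
proof -
  define S where "S = {z. g z \<le> g x}"
  have "compact S"
    using assms unfolding S_def boundedly_compact_def lsc_def by blast
  moreover have "x \<in> S" unfolding S_def by simp
  ultimately obtain z where "z \<in> S" "\<forall>w\<in>S. g z \<le> g w"
    using lsc_attains_min_on_compact[OF assms(2)] by blast
  then have "g z \<le> g w" for w
    using \<open>x \<in> S\<close> by (cases "w \<in> S") (auto simp: S_def)
  then show ?thesis by blast
qed

lemma geo_eq_geodesic:
  fixes x z :: "'a::metric_space"
  assumes "uniquely_geodesic TYPE('a)" and "is_geodesic \<gamma> x z" and "t \<in> {0..1}"
  shows "geo x z t = \<gamma> t"
proof -
  obtain \<gamma>0 where uniq: "\<forall>\<gamma>'. is_geodesic \<gamma>' x z \<longrightarrow> (\<forall>t\<in>{0..1}. \<gamma>' t = \<gamma>0 t)"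
    using assms(1) unfolding uniquely_geodesic_def by blast
  show ?thesis
    unfolding geo_def
  proof (rule the_equality)
    show "\<exists>\<gamma>'. is_geodesic \<gamma>' x z \<and> \<gamma> t = \<gamma>' t" using assms(2) by blast
  next
    fix w assume "\<exists>\<gamma>'. is_geodesic \<gamma>' x z \<and> w = \<gamma>' t"
    then show "w = \<gamma> t" using uniq assms(2,3) by metis
  qed
qed

lemma dist_geo_start:
  fixes x z :: "'a::metric_space"
  assumes "uniquely_geodesic TYPE('a)" and "t \<in> {0..1}"
  shows "dist x (geo x z t) = t * dist x z"
proof -
  obtain \<gamma> where \<gamma>: "is_geodesic \<gamma> x z"
    using assms(1) unfolding uniquely_geodesic_def by blast
  then have "\<gamma> 0 = x" and speed: "\<forall>s\<in>{0..1}. \<forall>r\<in>{0..1}. dist (\<gamma> s) (\<gamma> r) = \<bar>s - r\<bar> * dist x z"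
    unfolding is_geodesic_def by auto
  then have "dist x (\<gamma> t) = t * dist x z"
    using speed[rule_format, of 0 t] assms(2) by simp
  then show ?thesis
    using geo_eq_geodesic[OF assms(1) \<gamma> assms(2)] by simp
qed

lemma geo_convex_linear_lower_bound:
  fixes f :: "'a::metric_space \<Rightarrow> real"
  assumes "uniquely_geodesic TYPE('a)" and "geo_convex f"
    and sphere: "\<And>w. dist x w = 1 \<Longrightarrow> m \<le> f w" and "1 \<le> dist x z"
  shows "f x - dist x z * (f x - m) \<le> f z"
proof -
  define R where "R = dist x z"
  define t where "t = 1 / R"
  have R: "R \<ge> 1" using assms(4) unfolding R_def .
  then have t: "t \<in> {0..1}" unfolding t_def by simp
  have "dist x (geo x z t) = t * R"
    using dist_geo_start[OF assms(1) t] unfolding R_def .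
  then have "dist x (geo x z t) = 1" using R unfolding t_def by simp
  then have "m \<le> f (geo x z t)" by (rule sphere)
  also have "\<dots> \<le> (1 - t) * f x + t * f z"
    using assms(2) t unfolding geo_convex_def by blast
  finally have "R * m \<le> R * ((1 - t) * f x + t * f z)" using R by simp
  also have "\<dots> = (R - 1) * f x + f z" using R unfolding t_def by (simp add: field_simps)
  finally show ?thesis unfolding R_def by (simp add: algebra_simps)
qed

lemma prox_sublevel_bounded:
  fixes f :: "'a::metric_space \<Rightarrow> real"
  assumes "uniquely_geodesic TYPE('a)" and "boundedly_compact TYPE('a)"
    and "lsc f" and "geo_convex f" and "1 < p" and "0 < K"
  shows "bounded {z. f z + K * dist z x powr p \<le> f x}"
proof -
  have "compact (cball x 1)" using assms(2) unfolding boundedly_compact_def by auto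
  then obtain m where "m \<in> cball x 1" and m: "\<forall>w\<in>cball x 1. f m \<le> f w"
    using lsc_attains_min_on_compact[OF assms(3)] by fastforce
  define M where "M = \<bar>f x - f m\<bar>"
  have "dist x z \<le> max 1 ((M / K) powr (1 / (p - 1)))"
    if z: "f z + K * dist z x powr p \<le> f x" for z
  proof (cases "dist x z \<le> 1")
    case False
    define R where "R = dist x z"
    have R: "R > 1" using False unfolding R_def by simp
    have "f x - R * (f x - f m) \<le> f z"
      unfolding R_def using m R R_def
      by (intro geo_convex_linear_lower_bound[OF assms(1,4)]) auto
    moreover have "R * (f x - f m) \<le> R * M" using R unfolding M_def by simp
    ultimately have "R * (K * R powr (p - 1)) \<le> R * M"
      using z powr_mult_base[of R "p - 1"] R
      by (simp add: R_def dist_commute algebra_simps)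
    then have "R powr (p - 1) \<le> M / K" using R assms(6) by (simp add: field_simps)
    then have "(R powr (p - 1)) powr (1 / (p - 1)) \<le> (M / K) powr (1 / (p - 1))"
      using assms(5) by (intro powr_mono2) auto
    then have "R \<le> (M / K) powr (1 / (p - 1))"
      using R assms(5) by (simp add: powr_powr)
    then show ?thesis unfolding R_def by simp
  qed simp
  then show ?thesis unfolding bounded_def by blast
qed

lemma prox_objective_has_minimizer:
  fixes f :: "'a::metric_space \<Rightarrow> real"
  assumes "uniquely_geodesic TYPE('a)" and "boundedly_compact TYPE('a)"
    and "lsc f" and "geo_convex f" and "1 < p" and "0 < K"
  shows "\<exists>u. \<forall>z. f u + K * dist u x powr p \<le> f z + K * dist z x powr p"
proof (rule lsc_attains_min_if_bounded_sublevel[OF assms(2)])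
  show "lsc (\<lambda>z. f z + K * dist z x powr p)"
    using assms(5) by (intro lsc_add_continuous assms(3) continuous_intros continuous_on_powr') auto
  show "bounded {z. f z + K * dist z x powr p \<le> f x + K * dist x x powr p}"
    using prox_sublevel_bounded[OF assms] assms(5) by simp
qed

lemma le_of_forall_le_add_mult:
  fixes a b q :: real
  assumes "\<And>t. 0 < t \<Longrightarrow> t \<le> 1 \<Longrightarrow> a \<le> b + q * t"
  shows "a \<le> b"
proof (cases "q \<le> 0")
  case True
  then show ?thesis using assms[of 1] by simp
next
  case False
  show ?thesis
  proof (rule field_le_epsilon)
    fix e :: real assume "0 < e"
    define t where "t = min 1 (e / q)"
    have "0 < t" "t \<le> 1" using \<open>0 < e\<close> False unfolding t_def by auto
    moreover have "q * t \<le> e"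
      using False unfolding t_def by (simp add: min_def field_simps)
    ultimately show "a \<le> b + e" using assms by fastforce
  qed
qed

lemma prox_objective_growth:
  fixes f :: "'a::metric_space \<Rightarrow> real"
  assumes "p_uniformly_convex TYPE('a) p c" and "geo_convex f" and "0 < K"
    and min: "\<And>z. f y0 + K * dist y0 x powr p \<le> f z + K * dist z x powr p"
  shows "f y0 + K * dist y0 x powr p + c / 2 * K * dist y0 y powr p
           \<le> f y + K * dist y x powr p"
proof -
  define g where "g z = f z + K * dist z x powr p" for z
  define Q where "Q = c / 2 * K * dist y0 y powr p"
  have "g y0 \<le> g y - Q + Q * t" if t: "0 < t" "t \<le> 1" for t
  proof -
    define w where "w = geo y0 y t"
    have "t \<in> {0..1}" using t by simp
    then have fw: "f w \<le> (1 - t) * f y0 + t * f y"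
      and dw: "dist x w powr p \<le> (1 - t) * dist x y0 powr p + t * dist x y powr p
                  - c / 2 * t * (1 - t) * dist y0 y powr p"
      using assms(1,2) unfolding geo_convex_def p_uniformly_convex_def w_def by blast+
    have "g y0 \<le> g w" using min unfolding g_def .
    also have "\<dots> \<le> (1 - t) * f y0 + t * f y + K * ((1 - t) * dist x y0 powr p
        + t * dist x y powr p - c / 2 * t * (1 - t) * dist y0 y powr p)"
      unfolding g_def using fw dw assms(3) by (simp add: dist_commute add_mono)
    also have "\<dots> = (1 - t) * g y0 + t * (g y - Q + Q * t)"
      unfolding g_def Q_def by (simp add: dist_commute field_simps)
    finally have "t * g y0 \<le> t * (g y - Q + Q * t)" by (simp add: algebra_simps)
    then show ?thesis using t by simp
  qed
  then have "g y0 \<le> g y - Q" by (rule le_of_forall_le_add_mult)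
  then show ?thesis unfolding g_def Q_def by simp
qed

lemma prox_minimizer_iff_growth:
  fixes f :: "'a::metric_space \<Rightarrow> real"
  assumes "p_uniformly_convex TYPE('a) p c" and "geo_convex f" and "0 < c" and "0 < K"
  shows "(\<forall>z. f u + K * dist u x powr p \<le> f z + K * dist z x powr p)
    \<longleftrightarrow> (\<forall>y. f u + K * dist u x powr p + c / 2 * K * dist u y powr p
               \<le> f y + K * dist y x powr p)"
proof
  assume "\<forall>z. f u + K * dist u x powr p \<le> f z + K * dist z x powr p"
  then show "\<forall>y. f u + K * dist u x powr p + c / 2 * K * dist u y powr p
               \<le> f y + K * dist y x powr p"
    by (intro allI prox_objective_growth[OF assms(1,2,4)]) simp
next
  assume growth: "\<forall>y. f u + K * dist u x powr p + c / 2 * K * dist u y powr p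
                     \<le> f y + K * dist y x powr p"
  show "\<forall>z. f u + K * dist u x powr p \<le> f z + K * dist z x powr p"
  proof
    fix z
    have "0 \<le> c / 2 * K * dist u z powr p" using assms(3,4) by simp
    then show "f u + K * dist u x powr p \<le> f z + K * dist z x powr p"
      using growth[rule_format, of z] by linarith
  qed
qed

lemma prox_eqI:
  fixes f :: "'a::metric_space \<Rightarrow> real"
  assumes "p_uniformly_convex TYPE('a) p c" and "geo_convex f"
    and "0 < c" and "0 < p" and "0 < lam"
    and min: "\<And>z. f y + 1 / (p * lam powr (p - 1)) * dist y x powr p
                  \<le> f z + 1 / (p * lam powr (p - 1)) * dist z x powr p"
  shows "prox p f lam x = y"
  unfolding prox_def
proof (rule the_equality)
  let ?K = "1 / (p * lam powr (p - 1))"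
  fix z assume min_z: "\<forall>w. f z + ?K * dist z x powr p \<le> f w + ?K * dist w x powr p"
  have "0 < ?K" using assms(4,5) by simp
  have "f z + ?K * dist z x powr p + c / 2 * ?K * dist z y powr p \<le> f y + ?K * dist y x powr p"
    using min_z by (intro prox_objective_growth[OF assms(1,2) \<open>0 < ?K\<close>]) auto
  then have "c / 2 * ?K * dist z y powr p \<le> 0" using min_z min[of z] by linarith
  moreover have "0 < c / 2 * ?K * dist z y powr p" if "z \<noteq> y"
    using that \<open>0 < ?K\<close> assms(3) by simp
  ultimately show "z = y" by fastforce
qed (use min in blast)

lemma prox_inequality_iff_growth:
  fixes x xp y :: "'a::metric_space"
  assumes "0 < c" and "0 < p" and "0 < lam"
  defines "K \<equiv> 1 / (p * lam powr (p - 1))"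
  shows "4 / (c * p * lam powr (p - 1)) * Delta p c xp x xp y
           - (2 - c) / (2 * p * lam powr (p - 1)) * dist xp y powr p \<le> f y - f xp
    \<longleftrightarrow> f xp + K * dist xp x powr p + c / 2 * K * dist xp y powr p
           \<le> f y + K * dist y x powr p"
proof -
  have "lam powr (p - 1) > 0" using assms(3) by simp
  then have eq: "4 / (c * p * lam powr (p - 1)) * Delta p c xp x xp y
           - (2 - c) / (2 * p * lam powr (p - 1)) * dist xp y powr p
         = K * (c / 2 * dist xp y powr p + dist xp x powr p - dist y x powr p)"
    using assms(1,2) unfolding Delta_def K_def
    by (simp add: dist_commute field_simps)
  show ?thesis unfolding eq by (simp add: algebra_simps)
qed

theorem mainTheorem10:
  fixes f :: "'a::metric_space \<Rightarrow> real" and p c lam :: real and x xp :: 'a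
  assumes "uniquely_geodesic TYPE('a)"
    and "boundedly_compact TYPE('a)"
    and "1 < p" and "0 < c"
    and "p_uniformly_convex TYPE('a) p c"
    and "lsc f" and "geo_convex f"
    and "0 < lam"
  shows "xp = prox p f lam x \<longleftrightarrow>
    (\<forall>y. 4 / (c * p * lam powr (p - 1)) * Delta p c xp x xp y
          - (2 - c) / (2 * p * lam powr (p - 1)) * dist xp y powr p
        \<le> f y - f xp)"
proof -
  define K where "K = 1 / (p * lam powr (p - 1))"
  have "0 < p" and "0 < K" using assms(3,8) unfolding K_def by simp_all
  obtain u where u: "\<forall>z. f u + K * dist u x powr p \<le> f z + K * dist z x powr p"
    using prox_objective_has_minimizer[OF assms(1,2,6,7,3) \<open>0 < K\<close>] by blast
  have prox_eq: "prox p f lam x = v"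
    if "\<forall>z. f v + K * dist v x powr p \<le> f z + K * dist z x powr p" for v
    using that unfolding K_def by (intro prox_eqI[OF assms(5,7,4) \<open>0 < p\<close> assms(8)]) simp
  have "xp = prox p f lam x
    \<longleftrightarrow> (\<forall>z. f xp + K * dist xp x powr p \<le> f z + K * dist z x powr p)"
    using prox_eq u by metis
  also have "\<dots> \<longleftrightarrow> (\<forall>y. f xp + K * dist xp x powr p + c / 2 * K * dist xp y powr p
                       \<le> f y + K * dist y x powr p)"
    by (rule prox_minimizer_iff_growth[OF assms(5,7,4) \<open>0 < K\<close>])
  also have "\<dots> \<longleftrightarrow> (\<forall>y. 4 / (c * p * lam powr (p - 1)) * Delta p c xp x xp y
          - (2 - c) / (2 * p * lam powr (p - 1)) * dist xp y powr p \<le> f y - f xp)"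
    unfolding K_def by (simp only: prox_inequality_iff_growth[OF assms(4) \<open>0 < p\<close> assms(8)])
  finally show ?thesis .
qed

end
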